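(* Assume GCH. Let $\lambda<\kappa$ be infinite cardinals with $\mathrm{cf}(\kappa)=\omega$. Then every $(\lambda,\kappa)$-graph contains an $(\aleph_0,\kappa)$-subgraph.
   Context: For infinite cardinals $\lambda<\kappa$, a $(\lambda,\kappa)$-graph is a bipartite graph with bipartition $(A,B)$, $|A|=\lambda$, $|B|=\kappa$, in which every vertex $b\in B$ has infinitely many neighbours in $A$. An $(\aleph_0,\kappa)$-subgraph of such a graph is a subgraph with bipartition $(C,D)$, $C\subseteq A$, $D\subseteq B$, which is itself an $(\aleph_0,\kappa)$-graph. *)

theory Defs
  imports Main
begin

definition GCH_on :: "'t itself \<Rightarrow> bool" where
  "GCH_on (T :: 't itself) \<longleftrightarrow> (\<forall>(X::'t set) (Y::'t set). infinite X \<and> (card_of X, card_of Y) \<in> ordLess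
                      \<longrightarrow> (card_of (Pow X), card_of Y) \<in> ordLeq)"

definition cf_omega :: "'a rel \<Rightarrow> bool" where
  "cf_omega r \<longleftrightarrow>
     (\<exists>K. K \<subseteq> Field r \<and> cofinal K r \<and> (card_of K, card_of (UNIV::nat set)) \<in> ordIso) \<and>
     (\<forall>K. K \<subseteq> Field r \<and> cofinal K r \<longrightarrow> (card_of (UNIV::nat set), card_of K) \<in> ordLeq)"

definition nbrs :: "('a \<times> 'a) set \<Rightarrow> 'a set \<Rightarrow> 'a \<Rightarrow> 'a set" where
  "nbrs E A b = {a \<in> A. (a, b) \<in> E}"

definition bip_graph_inf :: "'a set \<Rightarrow> 'a set \<Rightarrow> ('a \<times> 'a) set \<Rightarrow> bool" where
  "bip_graph_inf A B E \<longleftrightarrow> A \<inter> B = {} \<and> E \<subseteq> A \<times> B \<and> (\<forall>b\<in>B. infinite (nbrs E A b))"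

text \<open>(lambda,kappa)-graph, with lambda = |A|, kappa = |B|.\<close>
definition lk_graph :: "'a set \<Rightarrow> 'a set \<Rightarrow> ('a \<times> 'a) set \<Rightarrow> bool" where
  "lk_graph A B E \<longleftrightarrow> bip_graph_inf A B E \<and> infinite A \<and> (card_of A, card_of B) \<in> ordLess"

end

theory Submission
  imports Defs "HOL-Library.Countable_Set_Type"
begin

(* Under GCH a cardinal \<kappa> > \<lambda> with cf \<kappa> = \<omega> \<le> \<lambda> is a limit cardinal,
   hence 2^\<lambda> < \<kappa>.  Choose for every b \<in> B a countably infinite set N b of
   neighbours of b; these are subsets of A, so fewer than \<kappa> of them occur.
   By pigeonhole, for each member \<kappa>\<^sub>n of a cofinal \<omega>-sequence in \<kappa> some
   value t\<^sub>n of N is taken by more than \<kappa>\<^sub>n vertices.  These fibres together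
   have size \<kappa>, and their neighbourhoods lie in the countable set \<Union>\<^sub>n t\<^sub>n. *)

unbundle cardinal_syntax

lemma card_of_not_ordLess_iff: "\<not> |A| <o |B| \<longleftrightarrow> |B| \<le>o |A|"
  by (rule not_ordLess_iff_ordLeq[OF card_of_Well_order card_of_Well_order])

lemma card_of_not_ordLeq_iff: "\<not> |A| \<le>o |B| \<longleftrightarrow> |B| <o |A|"
  by (rule not_ordLeq_iff_ordLess[OF card_of_Well_order card_of_Well_order])

lemma card_of_underS_ordLess: "k \<in> B \<Longrightarrow> |underS (card_of B) k| <o |B|"
  using card_of_underS[OF card_of_Card_order, of k B] unfolding Field_card_of .

lemma GCH_on_Pow_ordLeq:
  assumes GCH: "GCH_on TYPE('a set)" and inf: "infinite (A :: 'a set)"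
    and less: "|A| <o |S :: 'a set|"
  shows "|Pow A| \<le>o |S|"
proof -
  \<comment> \<open>GCH_on only speaks about sets of sets, so transport along a \<mapsto> {a}.\<close>
  let ?sg = "\<lambda>X :: 'a set. (\<lambda>a. {a}) ` X"
  have sg_iso: "|?sg X| =o |X|" for X
  proof -
    have "bij_betw (\<lambda>a. {a}) X (?sg X)" by (simp add: bij_betw_def inj_on_def)
    then show ?thesis using card_of_ordIso ordIso_symmetric by blast
  qed
  have "infinite (?sg A)" using inf finite_imageD[of "\<lambda>a. {a}" A] by (auto simp: inj_on_def)
  moreover have "|?sg A| <o |?sg S|"
    using sg_iso less ordIso_ordLess_trans ordLess_ordIso_trans ordIso_symmetric by blast
  ultimately have "|Pow (?sg A)| \<le>o |?sg S|" using GCH unfolding GCH_on_def by blast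
  moreover have "|Pow A| \<le>o |Pow (?sg A)|"
  proof -
    have "inj_on ?sg (Pow A)" "?sg ` Pow A \<subseteq> Pow (?sg A)" by (auto simp: inj_on_def)
    then show ?thesis using card_of_ordLeq by blast
  qed
  ultimately show ?thesis using sg_iso ordLeq_transitive ordLeq_ordIso_trans by blast
qed

lemma Pow_ordLess_if_cofinality_ordLeq:
  assumes GCH: "GCH_on TYPE('a set)" and inf: "infinite (A :: 'a set)"
    and less: "|A| <o |B :: 'a set|"
    and K: "K \<subseteq> B" "cofinal K |B|" "|K| \<le>o |A|"
  shows "|Pow A| <o |B|"
proof (rule ccontr)
  assume "\<not> |Pow A| <o |B|"
  then have B_le: "|B| \<le>o |Pow A|" by (simp add: card_of_not_ordLess_iff)
  have "|underS (card_of B) k| \<le>o |A|" if "k \<in> K" for k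
  proof (rule ccontr)
    assume "\<not> |underS (card_of B) k| \<le>o |A|"
    then have "|Pow A| \<le>o |underS (card_of B) k|"
      by (simp add: card_of_not_ordLeq_iff GCH_on_Pow_ordLeq[OF GCH inf])
    moreover have "|underS (card_of B) k| <o |B|"
      using K(1) that by (blast intro: card_of_underS_ordLess)
    ultimately have "|Pow A| <o |B|" by (rule ordLeq_ordLess_trans)
    then show False using B_le not_ordLess_ordLeq by blast
  qed
  then have "|\<Union>k\<in>K. underS (card_of B) k| \<le>o |A|"
    using card_of_UNION_ordLeq_infinite[OF inf K(3)] by blast
  moreover have "B \<subseteq> (\<Union>k\<in>K. underS (card_of B) k)"
    using K(2) unfolding cofinal_def underS_def Field_card_of by blast
  ultimately have "|B| \<le>o |A|" using card_of_mono1 ordLeq_transitive by blast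
  then show False using less not_ordLess_ordLeq by blast
qed

lemma small_cover_has_large_member:
  assumes inf: "infinite B" and T: "|T| <o |B|" and S: "|S| <o |B|"
    and cover: "B \<subseteq> (\<Union>t\<in>T. P t)"
  shows "\<exists>t\<in>T. |S| <o |P t|"
proof (rule ccontr)
  assume "\<not> ?thesis"
  then have P_le: "\<forall>t\<in>T. |P t| \<le>o |S|" by (simp add: card_of_not_ordLess_iff)
  have "|\<Union>t\<in>T. P t| <o |B|"
  proof (cases "finite (T <+> S)")
    case True
    then have "finite (\<Union>t\<in>T. P t)" using P_le card_of_ordLeq_finite by auto
    then show ?thesis using inf finite_ordLess_infinite[OF card_of_Well_order card_of_Well_order]
      unfolding Field_card_of by blast
  next
    case False
    then have "|\<Union>t\<in>T. P t| \<le>o |T <+> S|"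
      using P_le card_of_Plus1 card_of_Plus2 ordLeq_transitive
      by (intro card_of_UNION_ordLeq_infinite) blast+
    then show ?thesis
      using card_of_Plus_ordLess_infinite[OF inf T S] ordLeq_ordLess_trans by blast
  qed
  then show False using card_of_mono1[OF cover] not_ordLess_ordLeq by blast
qed

lemma card_of_ordIso_if_underS_ordLess:
  assumes cof: "cofinal K |B|" and D: "D \<subseteq> B"
    and large: "\<forall>k\<in>K. |underS (card_of B) k| <o |D|"
  shows "|D| =o |B|"
proof -
  have "|B| \<le>o |D|"
  proof (rule ccontr)
    assume "\<not> |B| \<le>o |D|"
    then have "|D| <o |B|" by (simp add: card_of_not_ordLeq_iff)
    then obtain a where a: "a \<in> B" and iso: "|D| =o Restr (card_of B) (underS (card_of B) a)"
      using ordLess_iff_ordIso_Restr[OF card_of_Well_order card_of_Well_order, of D B, THEN iffD1]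
      unfolding Field_card_of by blast
    have "|D| \<le>o |Field (Restr (card_of B) (underS (card_of B) a))|"
      using card_of_mono2[OF ordIso_imp_ordLeq[OF iso]] unfolding Field_card_of .
    also have "|Field (Restr (card_of B) (underS (card_of B) a))| \<le>o |underS (card_of B) a|"
      by (rule card_of_mono1[OF Field_Restr_subset])
    finally have D_le: "|D| \<le>o |underS (card_of B) a|" .
    obtain k where k: "k \<in> K" "(a, k) \<in> |B|"
      using cof a unfolding cofinal_def Field_card_of by blast
    have wo: "wo_rel |B|" unfolding wo_rel_def by (rule card_of_Well_order)
    have "|underS (card_of B) a| \<le>o |underS (card_of B) k|"
      by (rule card_of_mono1[OF underS_incr[OF wo_rel.TRANS[OF wo] wo_rel.ANTISYM[OF wo] k(2)]])
    with D_le have "|D| \<le>o |underS (card_of B) k|" by (rule ordLeq_transitive)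
    then show False using large k(1) not_ordLess_ordLeq by blast
  qed
  then show ?thesis using card_of_mono1[OF D] by (simp add: ordIso_iff_ordLeq)
qed

lemma exists_equipollent_subset_with_countable_image:
  assumes inf: "infinite B" and K: "K \<subseteq> B" "cofinal K |B|" "countable K"
    and few: "|f ` B| <o |B|"
  shows "\<exists>D\<subseteq>B. |D| =o |B| \<and> countable (f ` D)"
proof -
  have "\<forall>k\<in>K. \<exists>t. t \<in> f ` B \<and> |underS (card_of B) k| <o |{b\<in>B. f b = t}|"
  proof
    fix k assume "k \<in> K"
    have "|underS (card_of B) k| <o |B|"
      using K(1) \<open>k \<in> K\<close> by (blast intro: card_of_underS_ordLess)
    moreover have "B \<subseteq> (\<Union>t\<in>f ` B. {b\<in>B. f b = t})" by blast
    ultimately have "\<exists>t\<in>f ` B. |underS (card_of B) k| <o |{b\<in>B. f b = t}|"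
      by (rule small_cover_has_large_member[OF inf few])
    then show "\<exists>t. t \<in> f ` B \<and> |underS (card_of B) k| <o |{b\<in>B. f b = t}|" by blast
  qed
  then obtain g
    where g: "\<forall>k\<in>K. g k \<in> f ` B \<and> |underS (card_of B) k| <o |{b\<in>B. f b = g k}|"
    by (rule bchoice[elim_format]) blast
  define D where "D = (\<Union>k\<in>K. {b\<in>B. f b = g k})"
  have "D \<subseteq> B" unfolding D_def by blast
  moreover have "|D| =o |B|"
  proof (rule card_of_ordIso_if_underS_ordLess[OF K(2) \<open>D \<subseteq> B\<close>])
    show "\<forall>k\<in>K. |underS (card_of B) k| <o |D|"
    proof
      fix k assume "k \<in> K"
      then have "|underS (card_of B) k| <o |{b\<in>B. f b = g k}|" using g by blast
      moreover have "{b\<in>B. f b = g k} \<subseteq> D" using \<open>k \<in> K\<close> unfolding D_def by blast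
      ultimately show "|underS (card_of B) k| <o |D|"
        by (rule ordLess_ordLeq_trans[OF _ card_of_mono1])
    qed
  qed
  moreover have "f ` D \<subseteq> g ` K" unfolding D_def by blast
  then have "countable (f ` D)" by (rule countable_subset[OF _ countable_image[OF K(3)]])
  ultimately show ?thesis by blast
qed

lemma bip_graph_inf_on_union_of_neighbour_sets:
  assumes bip: "bip_graph_inf A B E" and D: "D \<subseteq> B" "D \<noteq> {}" "countable (N ` D)"
    and N: "\<forall>b\<in>D. N b \<subseteq> nbrs E A b \<and> countable (N b) \<and> infinite (N b)"
  defines "C \<equiv> \<Union>(N ` D)"
  shows "C \<subseteq> A" "|C| =o |UNIV :: nat set|" "bip_graph_inf C D (E \<inter> C \<times> D)"
proof -
  show "C \<subseteq> A" using N unfolding C_def nbrs_def by blast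
  have "countable (\<Union>X\<in>N ` D. X)" using D(3) N by (intro countable_UN) auto
  then have "countable C" unfolding C_def by simp
  moreover obtain b where "b \<in> D" using D(2) by blast
  then have "infinite C" using N finite_subset[of "N b" C] unfolding C_def by blast
  ultimately show "|C| =o |UNIV :: nat set|" using countable_or_card_of by blast
  have "infinite (nbrs (E \<inter> C \<times> D) C b)" if "b \<in> D" for b
  proof -
    have "N b \<subseteq> nbrs (E \<inter> C \<times> D) C b" using that N unfolding C_def nbrs_def by blast
    then show ?thesis using that N finite_subset by blast
  qed
  moreover have "C \<inter> D = {}" using bip D(1) \<open>C \<subseteq> A\<close> unfolding bip_graph_inf_def by blast
  ultimately show "bip_graph_inf C D (E \<inter> C \<times> D)" unfolding bip_graph_inf_def by blast
qed

theorem corollary4p7: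
  fixes A B :: "'a set" and E :: "('a \<times> 'a) set"
  assumes GCH: "GCH_on (TYPE('a set))"
    and graph: "lk_graph A B E"
    and cf: "cf_omega (card_of B)"
  shows "\<exists>C D F. C \<subseteq> A \<and> D \<subseteq> B \<and> F \<subseteq> E \<inter> (C \<times> D) \<and>
           bip_graph_inf C D F \<and>
           (card_of C, card_of (UNIV::nat set)) \<in> ordIso \<and>
           (card_of D, card_of B) \<in> ordIso"
proof -
  have bip: "bip_graph_inf A B E" and infA: "infinite A" and AB: "|A| <o |B|"
    using graph unfolding lk_graph_def by auto
  have infB: "infinite B" using infA AB card_of_ordLeq_finite ordLess_imp_ordLeq by blast
  obtain K where K: "K \<subseteq> B" "cofinal K |B|" and K_nat: "|K| =o |UNIV :: nat set|"
    using cf unfolding cf_omega_def Field_card_of by blast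
  have "countable K" using K_nat countable_card_of_nat ordIso_imp_ordLeq by blast
  have "|K| \<le>o |A|" using K_nat infA infinite_iff_card_of_nat ordIso_ordLeq_trans by blast
  then have PowA: "|Pow A| <o |B|" by (rule Pow_ordLess_if_cofinality_ordLeq[OF GCH infA AB K])
  have "\<forall>b\<in>B. \<exists>X. X \<subseteq> nbrs E A b \<and> countable X \<and> infinite X"
    using bip infinite_countable_subset' unfolding bip_graph_inf_def by blast
  then obtain N where N: "\<forall>b\<in>B. N b \<subseteq> nbrs E A b \<and> countable (N b) \<and> infinite (N b)"
    by (rule bchoice[elim_format]) blast
  then have "N ` B \<subseteq> Pow A" unfolding nbrs_def by blast
  then have "|N ` B| <o |B|" by (rule ordLeq_ordLess_trans[OF card_of_mono1 PowA])
  then obtain D where D: "D \<subseteq> B" "|D| =o |B|" "countable (N ` D)"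
    using exists_equipollent_subset_with_countable_image[OF infB K \<open>countable K\<close>] by blast
  have "D \<noteq> {}" using card_of_ordIso_finite[OF D(2)] infB by auto
  moreover have "\<forall>b\<in>D. N b \<subseteq> nbrs E A b \<and> countable (N b) \<and> infinite (N b)"
    using N D(1) by blast
  ultimately have "\<Union>(N ` D) \<subseteq> A" "|\<Union>(N ` D)| =o |UNIV :: nat set|"
    "bip_graph_inf (\<Union>(N ` D)) D (E \<inter> \<Union>(N ` D) \<times> D)"
    using bip_graph_inf_on_union_of_neighbour_sets[OF bip D(1) _ D(3)] by auto
  then show ?thesis using D(1,2) by blast
qed

end
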